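(* Let $X$ be a real Banach space, $I=\{1,\ldots,m\}$, $J=\{1,\ldots,l\}$, let $f_i\colon X\to\mathbb{R}$ ($i\in I$) and $g_j\colon X\to\mathbb{R}$ ($j\in J$) be given, and let $$M=\{x\in X \mid f_i(x)=0\ \forall i\in I,\ g_j(x)\le 0\ \forall j\in J\}.$$ Let $\overline{x}\in M$ and $J(\overline{x})=\{j\in J\mid g_j(\overline{x})=0\}$. Suppose that the functions $f_i$, $i\in I$, are continuous in a neighbourhood of $\overline{x}$; the functions $g_j$, $j\notin J(\overline{x})$, are upper semicontinuous at $\overline{x}$; and the functions $f_i$, $i\in I$, and $g_j$, $j\in J(\overline{x})$, are quasidifferentiable at $\overline{x}$ uniformly along finite dimensional spaces, with given quasidifferentials $[\underline{\partial} f_i(\overline{x}),\overline{\partial} f_i(\overline{x})]$ and $[\underline{\partial} g_j(\overline{x}),\overline{\partial} g_j(\overline{x})]$. Let $x_i^*\in\underline{\partial} f_i(\overline{x})$, $y_i^*\in\overline{\partial} f_i(\overline{x})$, $i\in I$, and $z_j^*\in\overline{\partial} g_j(\overline{x})$, $j\in J(\overline{x})$, be given, and suppose the following constraint qualification holds: (1) for any $i\in I$ there exists $v_i\in X$ such that $s(\underline{\partial} f_i(\overline{x})+y_i^*,v_i)<0$ and for any $k\ne i$ one has $s(\underline{\partial} f_k(\overline{x})+y_k^*,v_i)\le 0$ and $s(-x_k^*-\overline{\partial} f_k(\overline{x}),v_i)\le 0$; (2) for any $i\in I$ there exists $w_i\in X$ such that $s(-x_i^*-\overline{\partial} f_i(\overline{x}),w_i)<0$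 and for any $k\ne i$ one has $s(-x_k^*-\overline{\partial} f_k(\overline{x}),w_i)\le 0$ and $s(\underline{\partial} f_k(\overline{x})+y_k^*,w_i)\le 0$; (3) there exists $v_0\in X$ such that $s(\underline{\partial} g_j(\overline{x})+z_j^*,v_0)<0$ for any $j\in J(\overline{x})$, while for any $i\in I$ one has $s(\underline{\partial} f_i(\overline{x})+y_i^*,v_0)\le 0$ and $s(-x_i^*-\overline{\partial} f_i(\overline{x}),v_0)\le 0$. Then $$\Big\{v\in X \Bigm| s(\underline{\partial} f_i(\overline{x})+y_i^*,v)\le 0,\ s(-x_i^*-\overline{\partial} f_i(\overline{x}),v)\le 0\ \forall i\in I,\ s(\underline{\partial} g_j(\overline{x})+z_j^*,v)\le 0\ \forall j\in J(\overline{x})\Big\}\subseteq T_M(\overline{x}).$$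
   Context: $X$ is a real Banach space with topological dual $X^*$ and duality pairing $\langle\cdot,\cdot\rangle$. A function $f\colon X\to\mathbb{R}$ is directionally differentiable (d.d.) at $x$ if for every $v\in X$ the finite limit $f'(x,v)=\lim_{\alpha\to+0}(f(x+\alpha v)-f(x))/\alpha$ exists. It is d.d. at $x$ uniformly along finite dimensional spaces if it is d.d. at $x$ and for any $v\in X$, any finite dimensional subspace $X_0\subset X$ and any $\varepsilon>0$ there is $\delta>0$ such that $|(f(x+\alpha v')-f(x))/\alpha-f'(x,v)|<\varepsilon$ for all $\alpha\in(0,\delta)$ and $v'\in v+X_0$ with $\|v'-v\|<\delta$. $f$ is quasidifferentiable at $x$ if it is d.d. at $x$ and there is a pair $[\underline{\partial} f(x),\overline{\partial} f(x)]$ (a quasidifferential; subdifferential and superdifferential) of convex weak$^*$ compact subsets of $X^*$ with $f'(x,v)=\max_{x^*\in\underline{\partial} f(x)}\langle x^*,v\rangle+\min_{y^*\in\overline{\partial} f(x)}\langle y^*,v\rangle$ for all $v\in X$; it is quasidifferentiable uniformly along finite dimensional spaces if additionally d.d. uniformly along finite dimensional spaces. Quasidifferentials are not unique; a specific one is fixed for each function and all conditions refer to it. For $C\subset X^*$, $s(C,v)=\sup_{x^*\in C}\langle x^*,v\rangle$ is the support function. The contingent cone $T_M(x)$ to $M$ at $x\in M$ is the set of $v\in X$ for which there exist $\alpha_n\to+0$ and $v_n\to v$ with $x+\alpha_n v_n\in M$ for all $n$. Sums like $A+y^*$ are Minkowski sums. *)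

theory Defs
  imports "HOL-Analysis.Analysis"
begin

text \<open>The type 'a \<Rightarrow> real carries the product topology (HOL-Analysis,
  Function_Topology), i.e. the topology of pointwise convergence; restricted to X*
  this is exactly the weak* topology, so weak* compactness of C \<subseteq> X* is
  compactness of C in this topology.\<close>

definition dual_space :: "('a::real_normed_vector \<Rightarrow> real) set" where
  "dual_space = {\<phi>. bounded_linear \<phi>}"

definition fun_convex :: "('a \<Rightarrow> real) set \<Rightarrow> bool" where
  "fun_convex C \<longleftrightarrow> (\<forall>p\<in>C. \<forall>q\<in>C. \<forall>t::real. 0 \<le> t \<and> t \<le> 1 \<longrightarrow>
      (\<lambda>v. t * p v + (1 - t) * q v) \<in> C)"

definition cwc_set :: "('a::real_normed_vector \<Rightarrow> real) set \<Rightarrow> bool" where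
  "cwc_set C \<longleftrightarrow> C \<noteq> {} \<and> C \<subseteq> dual_space \<and> fun_convex C \<and> compact C"

definition supp :: "('a \<Rightarrow> real) set \<Rightarrow> 'a \<Rightarrow> real" where
  "supp C v = (SUP c\<in>C. c v)"

definition mink_plus :: "('a \<Rightarrow> real) set \<Rightarrow> ('a \<Rightarrow> real) set \<Rightarrow> ('a \<Rightarrow> real) set" where
  "mink_plus A B = {(\<lambda>v. a v + b v) | a b. a \<in> A \<and> b \<in> B}"

definition fun_uminus_set :: "('a \<Rightarrow> real) set \<Rightarrow> ('a \<Rightarrow> real) set" where
  "fun_uminus_set A = (\<lambda>a v. - a v) ` A"

definition dir_diff :: "('a::real_normed_vector \<Rightarrow> real) \<Rightarrow> 'a \<Rightarrow> bool" where
  "dir_diff f x \<longleftrightarrow> (\<forall>v. \<exists>L. ((\<lambda>\<alpha>. (f (x + \<alpha> *\<^sub>R v) - f x) / \<alpha>) \<longlongrightarrow> L) (at_right 0))"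

definition dir_deriv :: "('a::real_normed_vector \<Rightarrow> real) \<Rightarrow> 'a \<Rightarrow> 'a \<Rightarrow> real" where
  "dir_deriv f x v = Lim (at_right 0) (\<lambda>\<alpha>. (f (x + \<alpha> *\<^sub>R v) - f x) / \<alpha>)"

definition finite_dim_subspace :: "'a::real_vector set \<Rightarrow> bool" where
  "finite_dim_subspace X0 \<longleftrightarrow> subspace X0 \<and> (\<exists>B. finite B \<and> X0 = span B)"

definition dir_diff_unif :: "('a::real_normed_vector \<Rightarrow> real) \<Rightarrow> 'a \<Rightarrow> bool" where
  "dir_diff_unif f x \<longleftrightarrow> dir_diff f x \<and>
     (\<forall>v X0 \<epsilon>. finite_dim_subspace X0 \<and> \<epsilon> > 0 \<longrightarrow>
        (\<exists>\<delta>>0. \<forall>\<alpha> v'. 0 < \<alpha> \<and> \<alpha> < \<delta> \<and> v' - v \<in> X0 \<and> norm (v' - v) < \<delta> \<longrightarrow>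
            \<bar>(f (x + \<alpha> *\<^sub>R v') - f x) / \<alpha> - dir_deriv f x v\<bar> < \<epsilon>))"

text \<open>[Dl, Du] is a quasidifferential of f at x (max and min written as SUP/INF; they are attained since the sets are nonempty and compact).\<close>
definition quasidiff :: "('a::real_normed_vector \<Rightarrow> real) \<Rightarrow> 'a \<Rightarrow> ('a \<Rightarrow> real) set \<Rightarrow> ('a \<Rightarrow> real) set \<Rightarrow> bool" where
  "quasidiff f x Dl Du \<longleftrightarrow> dir_diff f x \<and> cwc_set Dl \<and> cwc_set Du \<and>
     (\<forall>v. dir_deriv f x v = (SUP p\<in>Dl. p v) + (INF q\<in>Du. q v))"

definition quasidiff_unif :: "('a::real_normed_vector \<Rightarrow> real) \<Rightarrow> 'a \<Rightarrow> ('a \<Rightarrow> real) set \<Rightarrow> ('a \<Rightarrow> real) set \<Rightarrow> bool" where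
  "quasidiff_unif f x Dl Du \<longleftrightarrow> quasidiff f x Dl Du \<and> dir_diff_unif f x"

definition usc_at :: "('a::topological_space \<Rightarrow> real) \<Rightarrow> 'a \<Rightarrow> bool" where
  "usc_at f x \<longleftrightarrow> (\<forall>\<epsilon>>0. \<forall>\<^sub>F y in at x. f y < f x + \<epsilon>)"

definition contingent_cone :: "'a::real_normed_vector set \<Rightarrow> 'a \<Rightarrow> 'a set" where
  "contingent_cone M x = {v. \<exists>\<alpha> w. (\<forall>n. \<alpha> n > 0) \<and> \<alpha> \<longlonglongrightarrow> 0 \<and> w \<longlonglongrightarrow> v \<and>
      (\<forall>n. x + \<alpha> n *\<^sub>R w n \<in> M)}"

end

theory Submission
  imports Defs
begin

text \<open>Let v satisfy the linearised constraints and fix eta > 0.  The quasidifferentials provide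
  sublinear majorants p i, q i, h j of the directional derivatives of f i, of - f i and of the
  active g j.  Perturb v to v + eta v0 and then, for a small eps > 0, to the family of directions
  Phi t = v + eta v0 + eps * (SUM i. t i V i + (1 - t i) W i) with t ranging over the unit cube.
  By the constraint qualification, p i is negative at Phi t on the face t i = 1, q i is negative on
  the face t i = 0, and every h j is negative on the whole cube.  Uniform directional
  differentiability and compactness of the cube turn this into sign conditions for
  t |-> f i (x + alpha Phi t) on opposite faces, for one small alpha > 0, and the Poincare-Miranda
  theorem, proved from Kuhn's combinatorial lemma, yields a common zero t.  The point
  x + alpha Phi t lies in M, the inactive constraints staying negative by upper semicontinuity,
  and norm (Phi t - v) = O(eta); letting eta tend to 0 shows that v is a contingent direction.\<close>

section \<open>Sublinear majorants of directional derivatives\<close>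

definition sublinear :: "('a::real_vector \<Rightarrow> real) \<Rightarrow> bool" where
  "sublinear p \<longleftrightarrow> (\<forall>u w. p (u + w) \<le> p u + p w) \<and> (\<forall>c u. 0 \<le> c \<longrightarrow> p (c *\<^sub>R u) \<le> c * p u)"

lemma sublinear_add_le: "sublinear p \<Longrightarrow> p (u + w) \<le> p u + p w"
  by (simp add: sublinear_def)

lemma sublinear_scaleR_le: "sublinear p \<Longrightarrow> 0 \<le> c \<Longrightarrow> p (c *\<^sub>R u) \<le> c * p u"
  by (simp add: sublinear_def)

lemma sublinear_diff_le: "sublinear p \<Longrightarrow> p u \<le> p w + p (u - w)"
  using sublinear_add_le[of p w "u - w"] by simp

lemma sublinear_sum_le:
  assumes "sublinear p"
  shows "p (\<Sum>k\<in>F. u k) \<le> (\<Sum>k\<in>F. p (u k))"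
proof (induction F rule: infinite_finite_induct)
  case (insert k F)
  then show ?case
    using sublinear_add_le[OF assms, of "u k" "sum u F"] by simp
qed (use sublinear_scaleR_le[OF assms, of 0 0] in simp_all)

lemma sublinear_scaleR_abs_le:
  assumes "sublinear p"
  shows "p (c *\<^sub>R u) \<le> \<bar>c\<bar> * (\<bar>p u\<bar> + \<bar>p (- u)\<bar>)"
proof (cases "0 \<le> c")
  case True
  then have "p (c *\<^sub>R u) \<le> c * p u"
    by (rule sublinear_scaleR_le[OF assms])
  also have "\<dots> = \<bar>c\<bar> * p u"
    using True by simp
  also have "\<dots> \<le> \<bar>c\<bar> * (\<bar>p u\<bar> + \<bar>p (- u)\<bar>)"
    by (intro mult_left_mono) auto
  finally show ?thesis .
next
  case False
  then have "p (c *\<^sub>R u) \<le> \<bar>c\<bar> * p (- u)"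
    using sublinear_scaleR_le[OF assms, of "\<bar>c\<bar>" "- u"] by simp
  also have "\<dots> \<le> \<bar>c\<bar> * (\<bar>p u\<bar> + \<bar>p (- u)\<bar>)"
    by (intro mult_left_mono) auto
  finally show ?thesis .
qed

lemma sublinear_add_linear: "sublinear p \<Longrightarrow> linear y \<Longrightarrow> sublinear (\<lambda>u. p u + y u)"
  by (auto simp: sublinear_def linear_add linear_scale distrib_left intro: add_mono)

lemma supp_upper: "bdd_above ((\<lambda>a. a u) ` A) \<Longrightarrow> a \<in> A \<Longrightarrow> a u \<le> supp A u"
  unfolding supp_def by (rule cSUP_upper)

lemma sublinear_supp:
  assumes ne: "A \<noteq> {}" and lin: "\<And>a. a \<in> A \<Longrightarrow> linear a"
    and bdd: "\<And>u. bdd_above ((\<lambda>a. a u) ` A)"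
  shows "sublinear (supp A)"
  unfolding sublinear_def
proof (intro allI impI conjI)
  fix u w
  show "supp A (u + w) \<le> supp A u + supp A w"
    unfolding supp_def[of A "u + w"]
  proof (rule cSUP_least[OF ne])
    fix a assume "a \<in> A"
    then show "a (u + w) \<le> supp A u + supp A w"
      using lin supp_upper[OF bdd] by (simp add: linear_add add_mono)
  qed
next
  fix c :: real and u assume c: "0 \<le> c"
  show "supp A (c *\<^sub>R u) \<le> c * supp A u"
    unfolding supp_def[of A "c *\<^sub>R u"]
  proof (rule cSUP_least[OF ne])
    fix a assume "a \<in> A"
    then show "a (c *\<^sub>R u) \<le> c * supp A u"
      using lin supp_upper[OF bdd] c by (simp add: linear_scale mult_left_mono)
  qed
qed

lemma mink_plus_commute: "mink_plus A B = mink_plus B A"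
  unfolding mink_plus_def by (force simp: add.commute)

lemma supp_mink_plus_singleton:
  assumes "A \<noteq> {}" "bdd_above ((\<lambda>a. a u) ` A)"
  shows "supp (mink_plus A {y}) u = supp A u + y u"
proof -
  have "(\<lambda>b. b u) ` mink_plus A {y} = (\<lambda>a. y u + a u) ` A"
    unfolding mink_plus_def by (force simp: add.commute)
  then show ?thesis
    using Sup_add_eq[OF assms(2,1), of "y u"] by (simp add: supp_def add.commute)
qed

lemma supp_fun_uminus_set: "supp (fun_uminus_set A) u = - (INF a\<in>A. a u)"
  by (simp add: supp_def fun_uminus_set_def Inf_real_def image_image)

lemma cwc_set_bounded: "cwc_set A \<Longrightarrow> bounded ((\<lambda>a. a u) ` A)"
  unfolding cwc_set_def
  by (intro compact_imp_bounded compact_continuous_image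
      continuous_on_subset[OF continuous_on_product_coordinates subset_UNIV]) auto

lemma cwc_set_linear: "cwc_set A \<Longrightarrow> a \<in> A \<Longrightarrow> linear a"
  by (auto simp: cwc_set_def dual_space_def bounded_linear.linear)

lemma cwc_set_fun_uminus_set:
  assumes "cwc_set A"
  shows "fun_uminus_set A \<noteq> {}" "\<And>b. b \<in> fun_uminus_set A \<Longrightarrow> linear b"
    "bdd_above ((\<lambda>b. b u) ` fun_uminus_set A)"
  using assms cwc_set_linear[OF assms] bounded_imp_bdd_below[OF cwc_set_bounded[OF assms]]
  by (auto simp: cwc_set_def fun_uminus_set_def image_image bdd_above_uminus_image linear_compose_neg)

lemma sublinear_supp_mink_plus:
  assumes A: "cwc_set A" and "linear y"
  shows "sublinear (supp (mink_plus A {y}))"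
proof -
  have ne: "A \<noteq> {}" and bdd: "\<And>u. bdd_above ((\<lambda>a. a u) ` A)"
    using A cwc_set_bounded[OF A] by (auto simp: cwc_set_def bounded_imp_bdd_above)
  then have "supp (mink_plus A {y}) = (\<lambda>u. supp A u + y u)"
    by (intro ext supp_mink_plus_singleton)
  moreover have "sublinear (supp A)"
    using ne cwc_set_linear[OF A] bdd by (rule sublinear_supp)
  ultimately show ?thesis
    using sublinear_add_linear \<open>linear y\<close> by simp
qed

lemma sublinear_supp_mink_plus_uminus:
  assumes A: "cwc_set A" and "linear x"
  shows "sublinear (supp (mink_plus {\<lambda>u. - x u} (fun_uminus_set A)))"
proof -
  note minus_A = cwc_set_fun_uminus_set[OF A]
  have "supp (mink_plus {\<lambda>u. - x u} (fun_uminus_set A)) = (\<lambda>u. supp (fun_uminus_set A) u + - x u)"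
    unfolding mink_plus_commute[of "{_}"] using minus_A by (intro ext supp_mink_plus_singleton)
  moreover have "sublinear (supp (fun_uminus_set A))"
    using minus_A by (rule sublinear_supp)
  ultimately show ?thesis
    using sublinear_add_linear[OF _ linear_compose_neg[OF \<open>linear x\<close>]] by simp
qed

lemma quasidiff_le_supp_mink_plus:
  assumes qd: "quasidiff f x Dl Du" and y: "y \<in> Du"
  shows "dir_deriv f x u \<le> supp (mink_plus Dl {y}) u"
proof -
  have Dl: "cwc_set Dl" and Du: "cwc_set Du"
    using qd by (auto simp: quasidiff_def)
  have "dir_deriv f x u = supp Dl u + (INF q\<in>Du. q u)"
    using qd by (simp add: quasidiff_def supp_def)
  also have "\<dots> \<le> supp Dl u + y u"
    using cINF_lower[OF bounded_imp_bdd_below[OF cwc_set_bounded[OF Du]] y] by simp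
  also have "\<dots> = supp (mink_plus Dl {y}) u"
    using Dl bounded_imp_bdd_above[OF cwc_set_bounded[OF Dl]]
    by (simp add: cwc_set_def supp_mink_plus_singleton)
  finally show ?thesis .
qed

lemma quasidiff_uminus_le_supp_mink_plus:
  assumes qd: "quasidiff f x Dl Du" and x': "x' \<in> Dl"
  shows "- dir_deriv f x u \<le> supp (mink_plus {\<lambda>u. - x' u} (fun_uminus_set Du)) u"
proof -
  have Dl: "cwc_set Dl" and Du: "cwc_set Du"
    using qd by (auto simp: quasidiff_def)
  have "- dir_deriv f x u = - supp Dl u + supp (fun_uminus_set Du) u"
    using qd supp_fun_uminus_set[of Du u] by (simp add: quasidiff_def supp_def[of Dl])
  also have "\<dots> \<le> supp (fun_uminus_set Du) u + - x' u"
    using cSUP_upper[OF x' bounded_imp_bdd_above[OF cwc_set_bounded[OF Dl]]] by (simp add: supp_def)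
  also have "\<dots> = supp (mink_plus {\<lambda>u. - x' u} (fun_uminus_set Du)) u"
    unfolding mink_plus_commute[of "{_}"] using cwc_set_fun_uminus_set[OF Du]
    by (simp add: supp_mink_plus_singleton)
  finally show ?thesis .
qed

definition dir_deriv_majorant :: "('a::real_normed_vector \<Rightarrow> real) \<Rightarrow> 'a \<Rightarrow> ('a \<Rightarrow> real) \<Rightarrow> bool" where
  "dir_deriv_majorant f x p \<longleftrightarrow> dir_diff_unif f x \<and> sublinear p \<and> (\<forall>u. dir_deriv f x u \<le> p u)"

lemma dir_deriv_uminus:
  assumes "dir_diff f x"
  shows "dir_deriv (\<lambda>y. - f y) x u = - dir_deriv f x u"
proof -
  obtain L where L: "((\<lambda>\<alpha>. (f (x + \<alpha> *\<^sub>R u) - f x) / \<alpha>) \<longlongrightarrow> L) (at_right 0)"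
    using assms unfolding dir_diff_def by blast
  then have "((\<lambda>\<alpha>. (- f (x + \<alpha> *\<^sub>R u) - - f x) / \<alpha>) \<longlongrightarrow> - L) (at_right 0)"
    using tendsto_minus[OF L] by (simp add: minus_divide_left)
  then show ?thesis
    unfolding dir_deriv_def using L by (simp add: tendsto_Lim)
qed

lemma dir_diff_unif_uminus:
  assumes f: "dir_diff_unif f x"
  shows "dir_diff_unif (\<lambda>y. - f y) x"
proof -
  have "dir_diff f x"
    using f by (simp add: dir_diff_unif_def)
  have "((\<lambda>\<alpha>. (- f (x + \<alpha> *\<^sub>R u) - - f x) / \<alpha>) \<longlongrightarrow> - L) (at_right 0)"
    if "((\<lambda>\<alpha>. (f (x + \<alpha> *\<^sub>R u) - f x) / \<alpha>) \<longlongrightarrow> L) (at_right 0)" for u L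
    using tendsto_minus[OF that] by (simp add: minus_divide_left)
  then have "dir_diff (\<lambda>y. - f y) x"
    using \<open>dir_diff f x\<close> unfolding dir_diff_def by blast
  moreover have "(- f (x + \<alpha> *\<^sub>R u') - - f x) / \<alpha> - dir_deriv (\<lambda>y. - f y) x u
      = - ((f (x + \<alpha> *\<^sub>R u') - f x) / \<alpha> - dir_deriv f x u)" for \<alpha> u u'
    by (simp add: dir_deriv_uminus[OF \<open>dir_diff f x\<close>] diff_divide_distrib)
  ultimately show ?thesis
    using f unfolding dir_diff_unif_def by (simp only: abs_minus_cancel) blast
qed

lemma quasidiff_unif_dir_deriv_majorant:
  assumes "quasidiff_unif f x Dl Du" "y \<in> Du"
  shows "dir_deriv_majorant f x (supp (mink_plus Dl {y}))"
proof -
  have qd: "quasidiff f x Dl Du" and unif: "dir_diff_unif f x"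
    using assms(1) by (simp_all add: quasidiff_unif_def)
  then have "sublinear (supp (mink_plus Dl {y}))"
    using assms(2) cwc_set_linear[of Du y] by (intro sublinear_supp_mink_plus) (auto simp: quasidiff_def)
  then show ?thesis
    using unif quasidiff_le_supp_mink_plus[OF qd assms(2)] by (simp add: dir_deriv_majorant_def)
qed

lemma quasidiff_unif_uminus_dir_deriv_majorant:
  assumes "quasidiff_unif f x Dl Du" "x' \<in> Dl"
  shows "dir_deriv_majorant (\<lambda>y. - f y) x (supp (mink_plus {\<lambda>u. - x' u} (fun_uminus_set Du)))"
proof -
  have qd: "quasidiff f x Dl Du" and unif: "dir_diff_unif f x"
    using assms(1) by (simp_all add: quasidiff_unif_def)
  then have "dir_deriv (\<lambda>y. - f y) x u \<le> supp (mink_plus {\<lambda>u. - x' u} (fun_uminus_set Du)) u" for u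
    using quasidiff_uminus_le_supp_mink_plus[OF qd assms(2)]
    by (simp add: dir_deriv_uminus dir_diff_unif_def)
  moreover have "sublinear (supp (mink_plus {\<lambda>u. - x' u} (fun_uminus_set Du)))"
    using qd assms(2) cwc_set_linear[of Dl x'] by (intro sublinear_supp_mink_plus_uminus) (auto simp: quasidiff_def)
  ultimately show ?thesis
    using dir_diff_unif_uminus[OF unif] by (simp add: dir_deriv_majorant_def)
qed

section \<open>The Poincare-Miranda theorem on the cube\<close>

text \<open>The cube [0,1]^I is embedded into nat => real by letting the coordinates outside I vanish;
  the product topology then makes it compact.\<close>

definition cube :: "nat set \<Rightarrow> (nat \<Rightarrow> real) set" where
  "cube I = {t. (\<forall>j\<in>I. 0 \<le> t j \<and> t j \<le> 1) \<and> (\<forall>j. j \<notin> I \<longrightarrow> t j = 0)}"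

lemma cube_eq_PiE: "cube I = PiE UNIV (\<lambda>j. if j \<in> I then {0..1} else {0})"
  by (simp add: cube_def set_eq_iff PiE_iff if_split_mem2 all_conj_distrib Ball_def)

lemma compact_cube: "compact (cube I)"
proof -
  have "compactin (product_topology (\<lambda>_. euclideanreal) UNIV) (cube I)"
    unfolding cube_eq_PiE compactin_PiE by (simp add: compactin_euclidean_iff)
  then show ?thesis
    unfolding euclidean_product_topology compactin_euclidean_iff .
qed

lemma tendsto_fun_componentwise:
  fixes f :: "'x \<Rightarrow> 'i \<Rightarrow> 'b::topological_space"
  shows "(f \<longlongrightarrow> l) F \<longleftrightarrow> (\<forall>i. ((\<lambda>x. f x i) \<longlongrightarrow> l i) F)"
  by (simp add: limitin_componentwise flip: euclidean_product_topology limitin_canonical_iff)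

lemma LIMSEQ_fun_uniformly_close:
  fixes a c :: "nat \<Rightarrow> 'i \<Rightarrow> real"
  assumes c: "c \<longlonglongrightarrow> z" and close: "\<And>n i. \<bar>a n i - c n i\<bar> \<le> d n" and d: "d \<longlonglongrightarrow> 0"
  shows "a \<longlonglongrightarrow> z"
  unfolding tendsto_fun_componentwise
proof
  fix i
  have "(\<lambda>n. a n i - c n i) \<longlonglongrightarrow> 0"
  proof (rule tendsto_sandwich[of "\<lambda>n. - d n" _ _ d])
    have "- d n \<le> a n i - c n i" "a n i - c n i \<le> d n" for n
      using close[of n i] by (auto simp: abs_le_iff)
    then show "\<forall>\<^sub>F n in sequentially. - d n \<le> a n i - c n i" "\<forall>\<^sub>F n in sequentially. a n i - c n i \<le> d n"
      by simp_all
    show "(\<lambda>n. - d n) \<longlonglongrightarrow> 0"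
      using tendsto_minus[OF d] by simp
  qed (rule d)
  moreover have "(\<lambda>n. c n i) \<longlonglongrightarrow> z i"
    using c by (simp add: tendsto_fun_componentwise)
  ultimately show "(\<lambda>n. a n i) \<longlonglongrightarrow> z i"
    using tendsto_add[of "\<lambda>n. a n i - c n i" 0 sequentially "\<lambda>n. c n i" "z i"] by simp
qed

lemma kuhn_cube_approx:
  fixes G :: "nat \<Rightarrow> (nat \<Rightarrow> real) \<Rightarrow> real" and p :: nat
  assumes face0: "\<And>i t. i < m \<Longrightarrow> t \<in> cube {..<m} \<Longrightarrow> t i = 0 \<Longrightarrow> 0 \<le> G i t"
    and face1: "\<And>i t. i < m \<Longrightarrow> t \<in> cube {..<m} \<Longrightarrow> t i = 1 \<Longrightarrow> G i t \<le> 0"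
    and p: "0 < p"
  shows "\<exists>c\<in>cube {..<m}. \<forall>i<m. \<exists>a\<in>cube {..<m}. \<exists>b\<in>cube {..<m}.
           (\<forall>j. \<bar>a j - c j\<bar> \<le> 1 / p) \<and> (\<forall>j. \<bar>b j - c j\<bar> \<le> 1 / p) \<and> 0 \<le> G i a \<and> G i b \<le> 0"
proof -
  define pt where "pt x = (\<lambda>j. if j < m then real (x j) / real p else 0)" for x :: "nat \<Rightarrow> nat"
  define label where "label x i =
    (if x i = 0 then 0 else if x i = p then 1 else if 0 < G i (pt x) then 0 else (1::nat))" for x i
  have pt_cube: "pt x \<in> cube {..<m}" if "\<forall>j<m. x j \<le> p" for x
    using that p by (auto simp: cube_def pt_def)
  have label0: "0 \<le> G i (pt x)" if "label x i = 0" "\<forall>j<m. x j \<le> p" "i < m" for x i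
    using that face0[OF that(3) pt_cube[OF that(2)]] by (auto simp: label_def pt_def split: if_splits)
  have label1: "G i (pt x) \<le> 0" if "label x i = 1" "\<forall>j<m. x j \<le> p" "i < m" for x i
    using that face1[OF that(3) pt_cube[OF that(2)]] p by (auto simp: label_def pt_def split: if_splits)
  obtain q where q: "\<forall>i<m. q i < p"
    and q_labels: "\<forall>i<m. \<exists>r s. (\<forall>j<m. q j \<le> r j \<and> r j \<le> q j + 1) \<and>
                     (\<forall>j<m. q j \<le> s j \<and> s j \<le> q j + 1) \<and> label r i \<noteq> label s i"
    by (rule kuhn_lemma[of p m label]) (use p in \<open>auto simp: label_def\<close>)
  have near: "\<forall>j<m. r j \<le> p" "\<forall>j. \<bar>pt r j - pt q j\<bar> \<le> 1 / p"
    if "\<forall>j<m. q j \<le> r j \<and> r j \<le> q j + 1" for r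
  proof -
    show "\<forall>j<m. r j \<le> p"
      using that q by fastforce
    have "\<bar>real (r j) - real (q j)\<bar> \<le> 1" if "j < m" for j
      using \<open>\<forall>j<m. q j \<le> r j \<and> r j \<le> q j + 1\<close> that by fastforce
    then show "\<forall>j. \<bar>pt r j - pt q j\<bar> \<le> 1 / p"
      using p by (auto simp: pt_def abs_divide diff_divide_distrib[symmetric] divide_right_mono)
  qed
  have other_label: "label x i = 1" if "label x i \<noteq> 0" for x i
    using that by (simp add: label_def split: if_splits)
  have witnesses: "\<exists>a\<in>cube {..<m}. \<exists>b\<in>cube {..<m}. (\<forall>j. \<bar>a j - pt q j\<bar> \<le> 1 / p) \<and>
      (\<forall>j. \<bar>b j - pt q j\<bar> \<le> 1 / p) \<and> 0 \<le> G i a \<and> G i b \<le> 0"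
    if i: "i < m" and r: "\<forall>j<m. q j \<le> r j \<and> r j \<le> q j + 1" and s: "\<forall>j<m. q j \<le> s j \<and> s j \<le> q j + 1"
      and r0: "label r i = 0" and s1: "label s i = 1" for i r s
  proof (rule bexI[of _ "pt r"], rule bexI[of _ "pt s"], intro conjI)
    show "pt r \<in> cube {..<m}" "pt s \<in> cube {..<m}"
      using pt_cube near(1) r s by blast+
    show "\<forall>j. \<bar>pt r j - pt q j\<bar> \<le> 1 / p" "\<forall>j. \<bar>pt s j - pt q j\<bar> \<le> 1 / p"
      using near(2) r s by blast+
    show "0 \<le> G i (pt r)" "G i (pt s) \<le> 0"
      using label0[OF r0 _ i] label1[OF s1 _ i] near(1) r s by blast+
  qed
  show ?thesis
  proof (rule bexI[of _ "pt q"], intro allI impI)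
    show "pt q \<in> cube {..<m}"
      using q by (intro pt_cube) (auto intro: less_imp_le)
    fix i assume i: "i < m"
    obtain r s where rs: "\<forall>j<m. q j \<le> r j \<and> r j \<le> q j + 1" "\<forall>j<m. q j \<le> s j \<and> s j \<le> q j + 1"
      and "label r i \<noteq> label s i"
      using q_labels i by blast
    then show "\<exists>a\<in>cube {..<m}. \<exists>b\<in>cube {..<m}. (\<forall>j. \<bar>a j - pt q j\<bar> \<le> 1 / p) \<and>
                 (\<forall>j. \<bar>b j - pt q j\<bar> \<le> 1 / p) \<and> 0 \<le> G i a \<and> G i b \<le> 0"
      using witnesses[OF i rs] witnesses[OF i rs(2,1)] other_label by metis
  qed
qed

lemma poincare_miranda_lessThan:
  fixes G :: "nat \<Rightarrow> (nat \<Rightarrow> real) \<Rightarrow> real"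
  assumes cont: "\<And>i. i < m \<Longrightarrow> continuous_on (cube {..<m}) (G i)"
    and face0: "\<And>i t. i < m \<Longrightarrow> t \<in> cube {..<m} \<Longrightarrow> t i = 0 \<Longrightarrow> 0 \<le> G i t"
    and face1: "\<And>i t. i < m \<Longrightarrow> t \<in> cube {..<m} \<Longrightarrow> t i = 1 \<Longrightarrow> G i t \<le> 0"
  shows "\<exists>t\<in>cube {..<m}. \<forall>i<m. G i t = 0"
proof -
  define d :: "nat \<Rightarrow> real" where "d n = 1 / real (Suc n)" for n
  define approx where "approx n c \<longleftrightarrow> c \<in> cube {..<m} \<and> (\<forall>i<m. \<exists>a\<in>cube {..<m}. \<exists>b\<in>cube {..<m}.
      (\<forall>j. \<bar>a j - c j\<bar> \<le> d n) \<and> (\<forall>j. \<bar>b j - c j\<bar> \<le> d n) \<and> 0 \<le> G i a \<and> G i b \<le> 0)" for n c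
  have "\<exists>c. approx n c" for n
    using kuhn_cube_approx[of m G "Suc n", OF face0 face1] unfolding approx_def d_def by blast
  then obtain c where c: "\<And>n. approx n (c n)"
    by metis
  then have "\<forall>n. c n \<in> cube {..<m}"
    by (simp add: approx_def)
  then obtain z r where z: "z \<in> cube {..<m}" and r: "strict_mono r" and cr: "(c \<circ> r) \<longlonglongrightarrow> z"
    using compact_imp_seq_compact[OF compact_cube] unfolding seq_compact_def by blast
  have dr: "(\<lambda>n. d (r n)) \<longlonglongrightarrow> 0"
    using LIMSEQ_subseq_LIMSEQ[OF LIMSEQ_Suc[OF lim_const_over_n[of 1]] r] by (simp add: d_def o_def)
  have limit: "(\<lambda>n. G i (a n)) \<longlonglongrightarrow> G i z"
    if i: "i < m" and a: "\<And>n. a n \<in> cube {..<m}" "\<And>n j. \<bar>a n j - c (r n) j\<bar> \<le> d (r n)" for i a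
  proof -
    have "a \<longlonglongrightarrow> z"
      using LIMSEQ_fun_uniformly_close[OF cr _ dr] a(2) by (simp add: o_def)
    then show ?thesis
      using a(1) by (intro continuous_on_tendsto_compose[OF cont[OF i] _ z]) simp_all
  qed
  show ?thesis
  proof (intro bexI[OF _ z] allI impI)
    fix i assume i: "i < m"
    have "\<forall>n. \<exists>a. a \<in> cube {..<m} \<and> (\<forall>j. \<bar>a j - c (r n) j\<bar> \<le> d (r n)) \<and> 0 \<le> G i a"
      using c i unfolding approx_def by blast
    then obtain a where a: "\<And>n. a n \<in> cube {..<m}" "\<And>n j. \<bar>a n j - c (r n) j\<bar> \<le> d (r n)"
      "\<And>n. 0 \<le> G i (a n)"
      by metis
    have "\<forall>n. \<exists>b. b \<in> cube {..<m} \<and> (\<forall>j. \<bar>b j - c (r n) j\<bar> \<le> d (r n)) \<and> G i b \<le> 0"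
      using c i unfolding approx_def by blast
    then obtain b where b: "\<And>n. b n \<in> cube {..<m}" "\<And>n j. \<bar>b n j - c (r n) j\<bar> \<le> d (r n)"
      "\<And>n. G i (b n) \<le> 0"
      by metis
    have "0 \<le> G i z"
      using LIMSEQ_le_const[OF limit[OF i a(1,2)]] a(3) by blast
    moreover have "G i z \<le> 0"
      using LIMSEQ_le_const2[OF limit[OF i b(1,2)]] b(3) by blast
    ultimately show "G i z = 0"
      by simp
  qed
qed

lemma poincare_miranda:
  fixes G :: "nat \<Rightarrow> (nat \<Rightarrow> real) \<Rightarrow> real"
  assumes I: "finite I" and cont: "\<And>i. i \<in> I \<Longrightarrow> continuous_on (cube I) (G i)"
    and face0: "\<And>i t. i \<in> I \<Longrightarrow> t \<in> cube I \<Longrightarrow> t i = 0 \<Longrightarrow> 0 \<le> G i t"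
    and face1: "\<And>i t. i \<in> I \<Longrightarrow> t \<in> cube I \<Longrightarrow> t i = 1 \<Longrightarrow> G i t \<le> 0"
  shows "\<exists>t\<in>cube I. \<forall>i\<in>I. G i t = 0"
proof -
  obtain b where b: "bij_betw b {..<card I} I"
    using ex_bij_betw_nat_finite[OF I] by (auto simp: atLeast0LessThan)
  define lift :: "(nat \<Rightarrow> real) \<Rightarrow> nat \<Rightarrow> real"
    where "lift s = (\<lambda>j. if j \<in> I then s (inv_into {..<card I} b j) else 0)" for s
  have b_in: "b k \<in> I" and lift_b: "lift s (b k) = s k" if "k < card I" for k s
    using that bij_betwE[OF b] bij_betw_inv_into_left[OF b] by (auto simp: lift_def)
  have inv_in: "inv_into {..<card I} b j < card I" if "j \<in> I" for j
    using bij_betwE[OF bij_betw_inv_into[OF b]] that by auto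
  have lift_cube: "lift s \<in> cube I" if "s \<in> cube {..<card I}" for s
    using that inv_in by (auto simp: cube_def lift_def)
  have "continuous_on UNIV lift"
    unfolding lift_def
  proof (intro continuous_on_coordinatewise_then_product)
    show "continuous_on UNIV (\<lambda>s. if j \<in> I then s (inv_into {..<card I} b j) else 0)" for j
      by (cases "j \<in> I") (simp_all add: continuous_on_product_coordinates)
  qed
  then have "\<exists>s\<in>cube {..<card I}. \<forall>k<card I. G (b k) (lift s) = 0"
    using lift_cube b_in lift_b
    by (intro poincare_miranda_lessThan continuous_on_compose2[OF cont] face0 face1)
      (auto intro: continuous_on_subset)
  then obtain s where s: "s \<in> cube {..<card I}" "\<forall>k<card I. G (b k) (lift s) = 0"
    by blast
  show ?thesis
  proof (intro bexI[OF _ lift_cube[OF s(1)]] ballI)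
    fix i assume "i \<in> I"
    then show "G i (lift s) = 0"
      using s(2) inv_in bij_betw_inv_into_right[OF b] by metis
  qed
qed

section \<open>Uniform first-order approximation on compact parameter sets\<close>

lemma eventually_at_right_less_const: "0 < b \<Longrightarrow> \<forall>\<^sub>F \<alpha> in at_right 0. \<alpha> < (b::real)"
  unfolding eventually_at_right_field by blast

text \<open>The difference quotient at t is compared with the directional derivative at the centre t'
  of a finite subcover, not at t itself: dir_deriv f x need not be continuous.\<close>

lemma eventually_dir_deriv_approx:
  fixes \<Phi> :: "'b::topological_space \<Rightarrow> 'a::real_normed_vector"
  assumes f: "dir_diff_unif f x" and X0: "finite_dim_subspace X0"
    and C: "compact C" "continuous_on C \<Phi>" "\<And>t t'. t \<in> C \<Longrightarrow> t' \<in> C \<Longrightarrow> \<Phi> t - \<Phi> t' \<in> X0"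
    and N: "\<And>t. t \<in> C \<Longrightarrow> open (N t) \<and> t \<in> N t" and e: "0 < e"
  shows "\<forall>\<^sub>F \<alpha> in at_right 0. \<forall>t\<in>C. \<exists>t'\<in>C. t \<in> N t' \<and>
           \<bar>(f (x + \<alpha> *\<^sub>R \<Phi> t) - f x) / \<alpha> - dir_deriv f x (\<Phi> t')\<bar> < e"
proof -
  have "\<forall>t'. \<exists>\<delta>>0. \<forall>\<alpha> v. 0 < \<alpha> \<and> \<alpha> < \<delta> \<and> v - \<Phi> t' \<in> X0 \<and> norm (v - \<Phi> t') < \<delta> \<longrightarrow>
      \<bar>(f (x + \<alpha> *\<^sub>R v) - f x) / \<alpha> - dir_deriv f x (\<Phi> t')\<bar> < e"
    using f X0 e unfolding dir_diff_unif_def by blast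
  then have "\<exists>\<delta>. \<forall>t'. 0 < \<delta> t' \<and> (\<forall>\<alpha> v. 0 < \<alpha> \<and> \<alpha> < \<delta> t' \<and> v - \<Phi> t' \<in> X0 \<and> norm (v - \<Phi> t') < \<delta> t' \<longrightarrow>
      \<bar>(f (x + \<alpha> *\<^sub>R v) - f x) / \<alpha> - dir_deriv f x (\<Phi> t')\<bar> < e)"
    by (rule choice)
  then obtain \<delta> where \<delta>: "\<And>t'. 0 < \<delta> t'"
    and approx: "\<And>t' \<alpha> v. 0 < \<alpha> \<Longrightarrow> \<alpha> < \<delta> t' \<Longrightarrow> v - \<Phi> t' \<in> X0 \<Longrightarrow> norm (v - \<Phi> t') < \<delta> t' \<Longrightarrow>
        \<bar>(f (x + \<alpha> *\<^sub>R v) - f x) / \<alpha> - dir_deriv f x (\<Phi> t')\<bar> < e"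
    by blast
  have "\<forall>t'. \<exists>U. open U \<and> U \<inter> C = \<Phi> -` ball (\<Phi> t') (\<delta> t') \<inter> C"
    using C(2) open_ball unfolding continuous_on_open_invariant by blast
  then have "\<exists>U. \<forall>t'. open (U t') \<and> U t' \<inter> C = \<Phi> -` ball (\<Phi> t') (\<delta> t') \<inter> C"
    by (rule choice)
  then obtain U where U: "\<And>t'. open (U t')" "\<And>t'. U t' \<inter> C = \<Phi> -` ball (\<Phi> t') (\<delta> t') \<inter> C"
    by blast
  have "t \<in> N t \<inter> U t" if "t \<in> C" for t
    using that N U(2)[of t] \<delta>[of t] by auto
  then have cover: "C \<subseteq> (\<Union>t'\<in>C. N t' \<inter> U t')"
    by blast
  obtain C' where C': "C' \<subseteq> C" "finite C'" "C \<subseteq> (\<Union>t'\<in>C'. N t' \<inter> U t')"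
    by (rule compactE_image[OF C(1) _ cover]) (use N U(1) in auto)
  have "\<forall>\<^sub>F \<alpha> in at_right 0. 0 < \<alpha> \<and> (\<forall>t'\<in>C'. \<alpha> < \<delta> t')"
    using eventually_at_right_less[of 0]
    by (simp add: eventually_conj_iff eventually_ball_finite_distrib[OF C'(2)] eventually_at_right_less_const[OF \<delta>])
  then show ?thesis
  proof (rule eventually_mono, intro ballI)
    fix \<alpha> t assume \<alpha>: "0 < \<alpha> \<and> (\<forall>t'\<in>C'. \<alpha> < \<delta> t')" and t: "t \<in> C"
    then obtain t' where t': "t' \<in> C'" "t \<in> N t'" "t \<in> U t'"
      using C'(3) by blast
    then have "norm (\<Phi> t - \<Phi> t') < \<delta> t'"
      using U(2)[of t'] t by (auto simp: dist_norm norm_minus_commute)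
    moreover have "t' \<in> C" "\<alpha> < \<delta> t'"
      using t' C'(1) \<alpha> by auto
    ultimately show "\<exists>t'\<in>C. t \<in> N t' \<and> \<bar>(f (x + \<alpha> *\<^sub>R \<Phi> t) - f x) / \<alpha> - dir_deriv f x (\<Phi> t')\<bar> < e"
      using t' t \<alpha> C(3)[OF t] approx by blast
  qed
qed

section \<open>Directions parametrised by the cube\<close>

text \<open>All these
  directions differ by elements of the span of the V j - W j, so uniform directional
  differentiability along finite dimensional spaces applies to the whole family.\<close>

definition cube_dir :: "nat set \<Rightarrow> (nat \<Rightarrow> 'a) \<Rightarrow> (nat \<Rightarrow> 'a) \<Rightarrow> 'a \<Rightarrow> real \<Rightarrow> (nat \<Rightarrow> real) \<Rightarrow> 'a::real_vector"
  where "cube_dir I V W w \<epsilon> t = w + \<epsilon> *\<^sub>R (\<Sum>j\<in>I. t j *\<^sub>R V j + (1 - t j) *\<^sub>R W j)"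

lemma continuous_on_cube_dir:
  fixes w :: "'a::real_normed_vector"
  shows "continuous_on UNIV (cube_dir I V W w \<epsilon>)"
  unfolding cube_dir_def by (intro continuous_intros continuous_on_product_coordinates)

lemma cube_dir_diff:
  "cube_dir I V W w \<epsilon> t - cube_dir I V W w \<epsilon> t' = \<epsilon> *\<^sub>R (\<Sum>j\<in>I. (t j - t' j) *\<^sub>R (V j - W j))"
  by (simp add: cube_dir_def sum_subtractf[symmetric] scaleR_diff_right[symmetric] algebra_simps)

lemma cube_dir_diff_in_span:
  "cube_dir I V W w \<epsilon> t - cube_dir I V W w \<epsilon> t' \<in> span ((\<lambda>j. V j - W j) ` I)"
  unfolding cube_dir_diff by (intro span_scale span_sum) (auto intro: span_base)

lemma norm_cube_dir_le:
  assumes "t \<in> cube I" "0 \<le> \<epsilon>"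
  shows "norm (cube_dir I V W w \<epsilon> t - w) \<le> \<epsilon> * (\<Sum>j\<in>I. norm (V j) + norm (W j))"
proof -
  have "norm (t j *\<^sub>R V j + (1 - t j) *\<^sub>R W j) \<le> norm (V j) + norm (W j)" if "j \<in> I" for j
  proof -
    have "0 \<le> t j" "t j \<le> 1"
      using assms(1) that by (auto simp: cube_def)
    then have "\<bar>t j\<bar> * norm (V j) + \<bar>1 - t j\<bar> * norm (W j) \<le> norm (V j) + norm (W j)"
      by (intro add_mono mult_left_le_one_le) auto
    then show ?thesis
      using norm_triangle_ineq[of "t j *\<^sub>R V j" "(1 - t j) *\<^sub>R W j"] by simp
  qed
  then have "norm (\<Sum>j\<in>I. t j *\<^sub>R V j + (1 - t j) *\<^sub>R W j) \<le> (\<Sum>j\<in>I. norm (V j) + norm (W j))"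
    by (intro order_trans[OF norm_sum sum_mono]) auto
  then show ?thesis
    using assms(2) by (simp add: cube_dir_def mult_left_mono)
qed

lemma sublinear_cube_dir_le:
  assumes p: "sublinear p" and t: "t \<in> cube I" and \<epsilon>: "0 \<le> \<epsilon>"
  shows "p (cube_dir I V W w \<epsilon> t) \<le> p w + \<epsilon> * (\<Sum>j\<in>I. t j * p (V j) + (1 - t j) * p (W j))"
proof -
  have summand: "p (t j *\<^sub>R V j + (1 - t j) *\<^sub>R W j) \<le> t j * p (V j) + (1 - t j) * p (W j)"
    if "j \<in> I" for j
  proof -
    have "0 \<le> t j" "t j \<le> 1"
      using t that by (auto simp: cube_def)
    then show ?thesis
      using sublinear_add_le[OF p, of "t j *\<^sub>R V j" "(1 - t j) *\<^sub>R W j"]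
        sublinear_scaleR_le[OF p, of "t j" "V j"] sublinear_scaleR_le[OF p, of "1 - t j" "W j"] by simp
  qed
  have "p (\<Sum>j\<in>I. t j *\<^sub>R V j + (1 - t j) *\<^sub>R W j) \<le> (\<Sum>j\<in>I. p (t j *\<^sub>R V j + (1 - t j) *\<^sub>R W j))"
    by (rule sublinear_sum_le[OF p])
  also have "\<dots> \<le> (\<Sum>j\<in>I. t j * p (V j) + (1 - t j) * p (W j))"
    using summand by (rule sum_mono)
  finally have sum_le: "p (\<Sum>j\<in>I. t j *\<^sub>R V j + (1 - t j) *\<^sub>R W j) \<le> (\<Sum>j\<in>I. t j * p (V j) + (1 - t j) * p (W j))" .
  have "p (cube_dir I V W w \<epsilon> t) \<le> p w + p (\<epsilon> *\<^sub>R (\<Sum>j\<in>I. t j *\<^sub>R V j + (1 - t j) *\<^sub>R W j))"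
    unfolding cube_dir_def by (rule sublinear_add_le[OF p])
  also have "\<dots> \<le> p w + \<epsilon> * p (\<Sum>j\<in>I. t j *\<^sub>R V j + (1 - t j) *\<^sub>R W j)"
    using sublinear_scaleR_le[OF p \<epsilon>] by simp
  also have "\<dots> \<le> p w + \<epsilon> * (\<Sum>j\<in>I. t j * p (V j) + (1 - t j) * p (W j))"
    using mult_left_mono[OF sum_le \<epsilon>] by simp
  finally show ?thesis .
qed

lemma sublinear_cube_dir_diff_le:
  assumes p: "sublinear p" and \<epsilon>: "0 \<le> \<epsilon>" and close: "\<And>j. j \<in> I \<Longrightarrow> \<bar>t j - t' j\<bar> \<le> \<rho>"
  shows "p (cube_dir I V W w \<epsilon> t - cube_dir I V W w \<epsilon> t')
    \<le> \<epsilon> * (\<rho> * (\<Sum>j\<in>I. \<bar>p (V j - W j)\<bar> + \<bar>p (- (V j - W j))\<bar>))"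
proof -
  have summand: "p ((t j - t' j) *\<^sub>R (V j - W j)) \<le> \<rho> * (\<bar>p (V j - W j)\<bar> + \<bar>p (- (V j - W j))\<bar>)"
    if "j \<in> I" for j
    using sublinear_scaleR_abs_le[OF p, of "t j - t' j" "V j - W j"] close[of j] that
    by (meson abs_ge_zero add_nonneg_nonneg mult_right_mono order_trans)
  have "p (\<Sum>j\<in>I. (t j - t' j) *\<^sub>R (V j - W j)) \<le> (\<Sum>j\<in>I. p ((t j - t' j) *\<^sub>R (V j - W j)))"
    by (rule sublinear_sum_le[OF p])
  also have "\<dots> \<le> \<rho> * (\<Sum>j\<in>I. \<bar>p (V j - W j)\<bar> + \<bar>p (- (V j - W j))\<bar>)"
    unfolding sum_distrib_left using summand by (rule sum_mono)
  finally have sum_le: "p (\<Sum>j\<in>I. (t j - t' j) *\<^sub>R (V j - W j)) \<le> \<rho> * (\<Sum>j\<in>I. \<bar>p (V j - W j)\<bar> + \<bar>p (- (V j - W j))\<bar>)" .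
  have "p (cube_dir I V W w \<epsilon> t - cube_dir I V W w \<epsilon> t') \<le> \<epsilon> * p (\<Sum>j\<in>I. (t j - t' j) *\<^sub>R (V j - W j))"
    unfolding cube_dir_diff by (rule sublinear_scaleR_le[OF p \<epsilon>])
  also have "\<dots> \<le> \<epsilon> * (\<rho> * (\<Sum>j\<in>I. \<bar>p (V j - W j)\<bar> + \<bar>p (- (V j - W j))\<bar>))"
    using mult_left_mono[OF sum_le \<epsilon>] .
  finally show ?thesis .
qed

lemma cube_dir_neighbourhood:
  assumes p: "sublinear p" and \<epsilon>: "0 \<le> \<epsilon>" and \<kappa>: "0 < \<kappa>"
  shows "\<exists>\<rho>>0. \<forall>t t'. (\<forall>j\<in>I. \<bar>t j - t' j\<bar> \<le> \<rho>) \<longrightarrow>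
           p (cube_dir I V W w \<epsilon> t - cube_dir I V W w \<epsilon> t') \<le> \<kappa>"
proof -
  define L where "L = (\<Sum>j\<in>I. \<bar>p (V j - W j)\<bar> + \<bar>p (- (V j - W j))\<bar>)"
  define \<rho> where "\<rho> = \<kappa> / (\<epsilon> * L + 1)"
  have "0 \<le> \<epsilon> * L"
    using \<epsilon> unfolding L_def by (intro mult_nonneg_nonneg sum_nonneg) auto
  then have "0 < \<rho>" "\<epsilon> * (\<rho> * L) \<le> \<kappa>"
    using \<kappa> by (simp_all add: \<rho>_def field_simps)
  then show ?thesis
    using sublinear_cube_dir_diff_le[OF p \<epsilon>] unfolding L_def by (meson order_trans)
qed

lemma eventually_less_on_cube:
  fixes f :: "'a::real_normed_vector \<Rightarrow> real"
  assumes I: "finite I" and f: "dir_deriv_majorant f x p" and \<epsilon>: "0 \<le> \<epsilon>" and S: "S \<subseteq> cube I"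
    and \<kappa>: "0 < \<kappa>" "\<And>t. t \<in> S \<Longrightarrow> p (cube_dir I V W w \<epsilon> t) \<le> - \<kappa>"
  shows "\<forall>\<^sub>F \<alpha> in at_right 0. \<forall>t\<in>S. f (x + \<alpha> *\<^sub>R cube_dir I V W w \<epsilon> t) < f x"
proof -
  let ?\<Phi> = "cube_dir I V W w \<epsilon>"
  have p: "sublinear p" "\<And>u. dir_deriv f x u \<le> p u" and unif: "dir_diff_unif f x"
    using f by (simp_all add: dir_deriv_majorant_def)
  have "0 < \<kappa> / 2"
    using \<kappa>(1) by simp
  then obtain \<rho> where \<rho>: "0 < \<rho>"
    "\<forall>t t'. (\<forall>j\<in>I. \<bar>t j - t' j\<bar> \<le> \<rho>) \<longrightarrow> p (?\<Phi> t - ?\<Phi> t') \<le> \<kappa> / 2"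
    using cube_dir_neighbourhood[OF p(1) \<epsilon>] by blast
  define N where "N t' = (\<Inter>j\<in>I. {t. \<bar>t j - t' j\<bar> < \<rho>})" for t'
  have N: "open (N t') \<and> t' \<in> N t'" for t'
    unfolding N_def using \<rho>(1) I
    by (auto intro!: open_INT open_Collect_less continuous_intros continuous_on_product_coordinates)
  have X0: "finite_dim_subspace (span ((\<lambda>j. V j - W j) ` I))"
    using I by (auto simp: finite_dim_subspace_def)
  have "\<forall>\<^sub>F \<alpha> in at_right 0. \<forall>t\<in>cube I. \<exists>t'\<in>cube I. t \<in> N t' \<and>
          \<bar>(f (x + \<alpha> *\<^sub>R ?\<Phi> t) - f x) / \<alpha> - dir_deriv f x (?\<Phi> t')\<bar> < \<kappa> / 2"
    using \<kappa>(1) by (intro eventually_dir_deriv_approx[OF unif X0 compact_cube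
        continuous_on_subset[OF continuous_on_cube_dir subset_UNIV] cube_dir_diff_in_span N]) simp
  then show ?thesis
    using eventually_at_right_less[of 0]
  proof eventually_elim
    case (elim \<alpha>)
    show ?case
    proof
      fix t assume t: "t \<in> S"
      then obtain t' where t': "t' \<in> cube I" "t \<in> N t'"
        and approx: "\<bar>(f (x + \<alpha> *\<^sub>R ?\<Phi> t) - f x) / \<alpha> - dir_deriv f x (?\<Phi> t')\<bar> < \<kappa> / 2"
        using elim(1) S by blast
      have "\<forall>j\<in>I. \<bar>t' j - t j\<bar> \<le> \<rho>"
        using t'(2) unfolding N_def by (auto simp: abs_minus_commute less_imp_le)
      then have "dir_deriv f x (?\<Phi> t') \<le> - \<kappa> / 2"
        using p(2)[of "?\<Phi> t'"] sublinear_diff_le[OF p(1), of "?\<Phi> t'" "?\<Phi> t"] \<rho>(2) \<kappa>(2)[OF t]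
        by fastforce
      then have "(f (x + \<alpha> *\<^sub>R ?\<Phi> t) - f x) / \<alpha> < 0"
        using approx by linarith
      then show "f (x + \<alpha> *\<^sub>R ?\<Phi> t) < f x"
        using elim(2) by (simp add: divide_less_0_iff)
    qed
  qed
qed

lemma sublinear_cube_dir_face_le:
  assumes I: "finite I" and p: "sublinear p" and t: "t \<in> cube I" and \<epsilon>: "0 \<le> \<epsilon>" and i: "i \<in> I"
    and w: "p w \<le> 0" and others: "\<And>k. k \<in> I \<Longrightarrow> k \<noteq> i \<Longrightarrow> p (V k) \<le> 0 \<and> p (W k) \<le> 0"
  shows "p (cube_dir I V W w \<epsilon> t) \<le> \<epsilon> * (t i * p (V i) + (1 - t i) * p (W i))"
proof -
  define a where "a k = t k * p (V k) + (1 - t k) * p (W k)" for k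
  have "0 \<le> - a k" if "k \<in> I - {i}" for k
  proof -
    have "0 \<le> t k" "0 \<le> 1 - t k" "p (V k) \<le> 0" "p (W k) \<le> 0"
      using that others[of k] t by (auto simp: cube_def)
    then have "t k * p (V k) \<le> 0" "(1 - t k) * p (W k) \<le> 0"
      by (simp_all add: mult_nonneg_nonpos)
    then show ?thesis
      unfolding a_def by linarith
  qed
  then have "- a i \<le> (\<Sum>k\<in>I. - a k)"
    using i I by (intro member_le_sum) auto
  then have "(\<Sum>k\<in>I. a k) \<le> a i"
    by (simp add: sum_negf)
  then show ?thesis
    using sublinear_cube_dir_le[OF p t \<epsilon>, of V W w] w mult_left_mono[OF _ \<epsilon>] unfolding a_def
    by (smt (verit))
qed

lemma eventually_cube_dir_in_ball:
  fixes x w :: "'a::real_normed_vector"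
  assumes r: "0 < r" and \<epsilon>: "0 \<le> \<epsilon>"
  shows "\<forall>\<^sub>F \<alpha> in at_right 0. \<forall>t\<in>cube I. x + \<alpha> *\<^sub>R cube_dir I V W w \<epsilon> t \<in> ball x r"
proof -
  define R where "R = norm w + \<epsilon> * (\<Sum>j\<in>I. norm (V j) + norm (W j))"
  have bound: "norm (cube_dir I V W w \<epsilon> t) \<le> R" if "t \<in> cube I" for t
    using norm_cube_dir_le[OF that \<epsilon>, of V W w] norm_triangle_sub[of "cube_dir I V W w \<epsilon> t" w]
    unfolding R_def by linarith
  have "0 < R + 1"
    unfolding R_def using \<epsilon> by (intro add_nonneg_pos add_nonneg_nonneg mult_nonneg_nonneg sum_nonneg) auto
  then have "\<forall>\<^sub>F \<alpha> in at_right 0. 0 < \<alpha> \<and> \<alpha> < r / (R + 1)"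
    using r eventually_at_right_less[of 0] eventually_at_right_less_const[of "r / (R + 1)"]
    by (simp add: eventually_conj_iff)
  then show ?thesis
  proof (rule eventually_mono, intro ballI)
    fix \<alpha> t assume \<alpha>: "0 < \<alpha> \<and> \<alpha> < r / (R + 1)" and t: "t \<in> cube I"
    have "\<alpha> * norm (cube_dir I V W w \<epsilon> t) \<le> \<alpha> * (R + 1)"
      using bound[OF t] \<alpha> by (intro mult_left_mono) auto
    also have "\<dots> < r"
      using \<alpha> \<open>0 < R + 1\<close> by (simp add: pos_less_divide_eq)
    finally show "x + \<alpha> *\<^sub>R cube_dir I V W w \<epsilon> t \<in> ball x r"
      using \<alpha> by (simp add: dist_norm)
  qed
qed

lemma common_zero_along_cube_dir:
  fixes F :: "nat \<Rightarrow> 'a::real_normed_vector \<Rightarrow> real"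
  assumes I: "finite I" and cont: "\<And>i. i \<in> I \<Longrightarrow> continuous_on (ball x r) (F i)"
    and in_ball: "\<And>t. t \<in> cube I \<Longrightarrow> x + \<alpha> *\<^sub>R cube_dir I V W w \<epsilon> t \<in> ball x r"
    and face0: "\<And>i t. i \<in> I \<Longrightarrow> t \<in> cube I \<Longrightarrow> t i = 0 \<Longrightarrow> 0 < F i (x + \<alpha> *\<^sub>R cube_dir I V W w \<epsilon> t)"
    and face1: "\<And>i t. i \<in> I \<Longrightarrow> t \<in> cube I \<Longrightarrow> t i = 1 \<Longrightarrow> F i (x + \<alpha> *\<^sub>R cube_dir I V W w \<epsilon> t) < 0"
  shows "\<exists>t\<in>cube I. \<forall>i\<in>I. F i (x + \<alpha> *\<^sub>R cube_dir I V W w \<epsilon> t) = 0"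
proof (rule poincare_miranda[OF I])
  fix i assume i: "i \<in> I"
  show "continuous_on (cube I) (\<lambda>t. F i (x + \<alpha> *\<^sub>R cube_dir I V W w \<epsilon> t))"
  proof (rule continuous_on_compose2[OF cont[OF i]])
    show "continuous_on (cube I) (\<lambda>t. x + \<alpha> *\<^sub>R cube_dir I V W w \<epsilon> t)"
      by (intro continuous_intros continuous_on_subset[OF continuous_on_cube_dir subset_UNIV])
    show "(\<lambda>t. x + \<alpha> *\<^sub>R cube_dir I V W w \<epsilon> t) ` cube I \<subseteq> ball x r"
      using in_ball by blast
  qed
qed (use face0 face1 in \<open>auto intro: less_imp_le\<close>)

section \<open>Contingent directions and constraints near a point\<close>

lemma contingent_coneI:
  assumes "\<And>\<eta>. 0 < \<eta> \<Longrightarrow> \<exists>\<alpha> z. 0 < \<alpha> \<and> \<alpha> \<le> \<eta> \<and> norm (z - v) \<le> \<eta> * Q \<and> x + \<alpha> *\<^sub>R z \<in> M"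
  shows "v \<in> contingent_cone M x"
proof -
  define d :: "nat \<Rightarrow> real" where "d = (\<lambda>n. 1 / real (Suc n))"
  have d: "\<And>n. 0 < d n" "d \<longlonglongrightarrow> 0"
    using LIMSEQ_Suc[OF lim_const_over_n[of 1]] by (simp_all add: d_def)
  have "\<exists>\<alpha> z. 0 < \<alpha> \<and> \<alpha> \<le> d n \<and> norm (z - v) \<le> d n * Q \<and> x + \<alpha> *\<^sub>R z \<in> M" for n
    using assms d(1) by blast
  then obtain \<alpha> z where \<alpha>: "\<And>n. 0 < \<alpha> n" "\<And>n. \<alpha> n \<le> d n"
    and z: "\<And>n. norm (z n - v) \<le> d n * Q" and M: "\<And>n. x + \<alpha> n *\<^sub>R z n \<in> M"
    by metis
  have "\<alpha> \<longlonglongrightarrow> 0"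
  proof (rule tendsto_sandwich[OF _ _ tendsto_const d(2)])
    show "\<forall>\<^sub>F n in sequentially. 0 \<le> \<alpha> n" "\<forall>\<^sub>F n in sequentially. \<alpha> n \<le> d n"
      using \<alpha> by (simp_all add: less_imp_le)
  qed
  moreover have "(\<lambda>n. norm (z n - v)) \<longlonglongrightarrow> 0"
  proof (rule tendsto_sandwich[OF _ _ tendsto_const tendsto_mult_left_zero[OF d(2)]])
    show "\<forall>\<^sub>F n in sequentially. 0 \<le> norm (z n - v)" "\<forall>\<^sub>F n in sequentially. norm (z n - v) \<le> d n * Q"
      using z by simp_all
  qed
  then have "z \<longlonglongrightarrow> v"
    by (simp add: tendsto_norm_zero_iff LIM_zero_iff)
  ultimately show ?thesis
    unfolding contingent_cone_def using \<alpha>(1) M by blast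
qed

lemma eventually_ball_subset:
  assumes "open U" "x \<in> U"
  shows "\<forall>\<^sub>F r in at_right 0. ball x r \<subseteq> U"
proof -
  obtain e where "0 < e" "ball x e \<subseteq> U"
    using assms open_contains_ball by blast
  then show ?thesis
    by (intro eventually_mono[OF eventually_at_right_less_const[OF \<open>0 < e\<close>]]) auto
qed

lemma usc_at_neg_nhd:
  assumes "usc_at g x" "g x < 0"
  shows "\<exists>U. open U \<and> x \<in> U \<and> (\<forall>y\<in>U. g y < 0)"
proof -
  have "0 < - g x"
    using assms(2) by simp
  then have "\<forall>\<^sub>F y in at x. g y < g x + - g x"
    by (rule assms(1)[unfolded usc_at_def, rule_format])
  then obtain U where U: "open U" "x \<in> U" "\<And>y. y \<in> U \<Longrightarrow> y \<noteq> x \<Longrightarrow> g y < 0"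
    unfolding eventually_at_topological by auto
  show ?thesis
  proof (intro exI conjI ballI)
    fix y assume "y \<in> U"
    then show "g y < 0"
      using U(3) assms(2) by (cases "y = x") auto
  qed (use U in auto)
qed

lemma ex_ball_continuous_negative:
  assumes "finite I" "finite K"
    and cont: "\<forall>i\<in>I. \<exists>U. open U \<and> x \<in> U \<and> continuous_on U (f i)"
    and neg: "\<forall>j\<in>K. usc_at (g j) x \<and> g j x < 0"
  shows "\<exists>r>0. (\<forall>i\<in>I. continuous_on (ball x r) (f i)) \<and> (\<forall>j\<in>K. \<forall>y\<in>ball x r. g j y < 0)"
proof -
  have "\<forall>\<^sub>F r in at_right 0. continuous_on (ball x r) (f i)" if i: "i \<in> I" for i
  proof -
    obtain U where U: "open U" "x \<in> U" "continuous_on U (f i)"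
      using cont[rule_format, OF i] by blast
    show ?thesis
      using eventually_ball_subset[OF U(1,2)] by (rule eventually_mono) (rule continuous_on_subset[OF U(3)])
  qed
  moreover have "\<forall>\<^sub>F r in at_right 0. \<forall>y\<in>ball x r. g j y < 0" if j: "j \<in> K" for j
  proof -
    obtain U where U: "open U" "x \<in> U" "\<forall>y\<in>U. g j y < 0"
      using neg[rule_format, OF j] usc_at_neg_nhd by blast
    show ?thesis
      using eventually_ball_subset[OF U(1,2)] by (rule eventually_mono) (use U(3) in blast)
  qed
  ultimately have "\<forall>\<^sub>F r in at_right 0. 0 < r \<and> (\<forall>i\<in>I. continuous_on (ball x r) (f i)) \<and>
      (\<forall>j\<in>K. \<forall>y\<in>ball x r. g j y < 0)"
    using eventually_at_right_less[of 0] assms(1,2)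
    by (simp add: eventually_conj_iff eventually_ball_finite_distrib)
  from eventually_happens'[OF trivial_limit_at_right_real this] show ?thesis
    by blast
qed

section \<open>Tangent directions of a qualified constraint system\<close>

locale cq_system =
  fixes x :: "'a::real_normed_vector" and I :: "nat set" and F p q :: "nat \<Rightarrow> 'a \<Rightarrow> real"
    and J :: "nat set" and H h :: "nat \<Rightarrow> 'a \<Rightarrow> real" and v v0 :: 'a and V W :: "nat \<Rightarrow> 'a"
  assumes finite_I: "finite I" and finite_J: "finite J"
    and equality: "\<forall>i\<in>I. F i x = 0 \<and> dir_deriv_majorant (F i) x (p i) \<and>
      dir_deriv_majorant (\<lambda>y. - F i y) x (q i)"
    and active: "\<forall>j\<in>J. H j x = 0 \<and> dir_deriv_majorant (H j) x (h j)"
    and v: "\<forall>i\<in>I. p i v \<le> 0 \<and> q i v \<le> 0" "\<forall>j\<in>J. h j v \<le> 0"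
    and v0: "\<forall>j\<in>J. h j v0 < 0" "\<forall>i\<in>I. p i v0 \<le> 0 \<and> q i v0 \<le> 0"
    and V: "\<forall>i\<in>I. p i (V i) < 0 \<and> (\<forall>k\<in>I. k \<noteq> i \<longrightarrow> p k (V i) \<le> 0 \<and> q k (V i) \<le> 0)"
    and W: "\<forall>i\<in>I. q i (W i) < 0 \<and> (\<forall>k\<in>I. k \<noteq> i \<longrightarrow> q k (W i) \<le> 0 \<and> p k (W i) \<le> 0)"
begin

definition perturbed_dir :: "real \<Rightarrow> real \<Rightarrow> (nat \<Rightarrow> real) \<Rightarrow> 'a" where
  "perturbed_dir \<eta> \<epsilon> = cube_dir I V W (v + \<eta> *\<^sub>R v0) \<epsilon>"

lemma sublinear_p: "i \<in> I \<Longrightarrow> sublinear (p i)"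
  and sublinear_q: "i \<in> I \<Longrightarrow> sublinear (q i)"
  and sublinear_h: "j \<in> J \<Longrightarrow> sublinear (h j)"
  using equality active by (simp_all add: dir_deriv_majorant_def)

lemma majorant_base:
  assumes "0 \<le> \<eta>"
  shows "\<And>i. i \<in> I \<Longrightarrow> p i (v + \<eta> *\<^sub>R v0) \<le> 0" "\<And>i. i \<in> I \<Longrightarrow> q i (v + \<eta> *\<^sub>R v0) \<le> 0"
    "\<And>j. j \<in> J \<Longrightarrow> h j (v + \<eta> *\<^sub>R v0) \<le> \<eta> * h j v0"
proof -
  have *: "r (v + \<eta> *\<^sub>R v0) \<le> r v + \<eta> * r v0" if "sublinear r" for r
    using sublinear_add_le[OF that] sublinear_scaleR_le[OF that assms] by (meson add_left_mono order_trans)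
  show "p i (v + \<eta> *\<^sub>R v0) \<le> 0" "q i (v + \<eta> *\<^sub>R v0) \<le> 0" if "i \<in> I" for i
    using *[OF sublinear_p[OF that]] *[OF sublinear_q[OF that]] v(1) v0(2) that
      mult_nonneg_nonpos[OF assms, of "p i v0"] mult_nonneg_nonpos[OF assms, of "q i v0"]
    by auto
  show "h j (v + \<eta> *\<^sub>R v0) \<le> \<eta> * h j v0" if "j \<in> J" for j
    using *[OF sublinear_h[OF that]] v(2) that by auto
qed

lemma eventually_inequality_margin:
  assumes "0 < \<eta>"
  shows "\<forall>\<^sub>F \<epsilon> in at_right 0. \<forall>j\<in>J. \<forall>t\<in>cube I. h j (perturbed_dir \<eta> \<epsilon> t) \<le> \<eta> * h j v0 / 2"
  unfolding eventually_ball_finite_distrib[OF finite_J]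
proof
  fix j assume j: "j \<in> J"
  define B where "B = (\<Sum>k\<in>I. \<bar>h j (V k)\<bar> + \<bar>h j (W k)\<bar>)"
  have "((\<lambda>\<epsilon>. \<epsilon> * B) \<longlongrightarrow> 0 * B) (at_right 0)"
    by (intro tendsto_intros)
  moreover have "0 < - (\<eta> * h j v0 / 2)"
    using mult_pos_neg[OF assms] v0(1) j by simp
  ultimately have "\<forall>\<^sub>F \<epsilon> in at_right 0. \<epsilon> * B < - (\<eta> * h j v0 / 2)"
    by (intro order_tendstoD(2)) auto
  then show "\<forall>\<^sub>F \<epsilon> in at_right 0. \<forall>t\<in>cube I. h j (perturbed_dir \<eta> \<epsilon> t) \<le> \<eta> * h j v0 / 2"
    using eventually_at_right_less[of 0]
  proof eventually_elim
    case (elim \<epsilon>)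
    show ?case
    proof
      fix t assume t: "t \<in> cube I"
      have weight: "s * y \<le> \<bar>y\<bar>" if "0 \<le> s" "s \<le> 1" for s y :: real
        using order_trans[OF mult_left_mono[OF abs_ge_self that(1)] mult_left_le_one_le[OF abs_ge_zero that]] .
      have "t k * h j (V k) + (1 - t k) * h j (W k) \<le> \<bar>h j (V k)\<bar> + \<bar>h j (W k)\<bar>" if "k \<in> I" for k
        using t that by (intro add_mono weight) (auto simp: cube_def)
      then have "(\<Sum>k\<in>I. t k * h j (V k) + (1 - t k) * h j (W k)) \<le> B"
        unfolding B_def by (rule sum_mono)
      then have "\<epsilon> * (\<Sum>k\<in>I. t k * h j (V k) + (1 - t k) * h j (W k)) \<le> \<epsilon> * B"
        using elim(2) by (simp add: mult_left_mono)
      then show "h j (perturbed_dir \<eta> \<epsilon> t) \<le> \<eta> * h j v0 / 2"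
        using sublinear_cube_dir_le[OF sublinear_h[OF j] t, of \<epsilon> V W "v + \<eta> *\<^sub>R v0"] elim
          majorant_base(3)[OF _ j, of \<eta>] assms unfolding perturbed_dir_def by linarith
    qed
  qed
qed

lemma eventually_face_one:
  assumes "0 \<le> \<eta>" "0 < \<epsilon>" "i \<in> I"
  shows "\<forall>\<^sub>F \<alpha> in at_right 0. \<forall>t\<in>{t \<in> cube I. t i = 1}. F i (x + \<alpha> *\<^sub>R perturbed_dir \<eta> \<epsilon> t) < 0"
proof -
  have "\<forall>\<^sub>F \<alpha> in at_right 0. \<forall>t\<in>{t \<in> cube I. t i = 1}. F i (x + \<alpha> *\<^sub>R perturbed_dir \<eta> \<epsilon> t) < F i x"
    unfolding perturbed_dir_def
  proof (rule eventually_less_on_cube[OF finite_I])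
    show "0 < - (\<epsilon> * p i (V i))"
      using assms V by (simp add: mult_pos_neg)
    have others: "p i (V k) \<le> 0 \<and> p i (W k) \<le> 0" if "k \<in> I" "k \<noteq> i" for k
      using V W that assms(3) by auto
    show "p i (cube_dir I V W (v + \<eta> *\<^sub>R v0) \<epsilon> t) \<le> - (- (\<epsilon> * p i (V i)))"
      if t: "t \<in> {t \<in> cube I. t i = 1}" for t
    proof -
      have "p i (cube_dir I V W (v + \<eta> *\<^sub>R v0) \<epsilon> t) \<le> \<epsilon> * (t i * p i (V i) + (1 - t i) * p i (W i))"
        by (rule sublinear_cube_dir_face_le[OF finite_I sublinear_p[OF assms(3)]])
          (use t assms others majorant_base(1) in auto)
      then show ?thesis
        using t by simp
    qed
  qed (use equality assms in auto)
  then show ?thesis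
    using equality assms(3) by simp
qed

lemma eventually_face_zero:
  assumes "0 \<le> \<eta>" "0 < \<epsilon>" "i \<in> I"
  shows "\<forall>\<^sub>F \<alpha> in at_right 0. \<forall>t\<in>{t \<in> cube I. t i = 0}. 0 < F i (x + \<alpha> *\<^sub>R perturbed_dir \<eta> \<epsilon> t)"
proof -
  have "\<forall>\<^sub>F \<alpha> in at_right 0. \<forall>t\<in>{t \<in> cube I. t i = 0}. - F i (x + \<alpha> *\<^sub>R perturbed_dir \<eta> \<epsilon> t) < - F i x"
    unfolding perturbed_dir_def
  proof (rule eventually_less_on_cube[OF finite_I])
    show "0 < - (\<epsilon> * q i (W i))"
      using assms W by (simp add: mult_pos_neg)
    have others: "q i (V k) \<le> 0 \<and> q i (W k) \<le> 0" if "k \<in> I" "k \<noteq> i" for k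
      using V W that assms(3) by auto
    show "q i (cube_dir I V W (v + \<eta> *\<^sub>R v0) \<epsilon> t) \<le> - (- (\<epsilon> * q i (W i)))"
      if t: "t \<in> {t \<in> cube I. t i = 0}" for t
    proof -
      have "q i (cube_dir I V W (v + \<eta> *\<^sub>R v0) \<epsilon> t) \<le> \<epsilon> * (t i * q i (V i) + (1 - t i) * q i (W i))"
        by (rule sublinear_cube_dir_face_le[OF finite_I sublinear_q[OF assms(3)]])
          (use t assms others majorant_base(2) in auto)
      then show ?thesis
        using t by simp
    qed
  qed (use equality assms in auto)
  then show ?thesis
    using equality assms(3) by simp
qed

lemma eventually_active:
  assumes "0 < \<eta>" "0 < \<epsilon>" "j \<in> J"
    and margin: "\<And>t. t \<in> cube I \<Longrightarrow> h j (perturbed_dir \<eta> \<epsilon> t) \<le> \<eta> * h j v0 / 2"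
  shows "\<forall>\<^sub>F \<alpha> in at_right 0. \<forall>t\<in>cube I. H j (x + \<alpha> *\<^sub>R perturbed_dir \<eta> \<epsilon> t) < 0"
proof -
  have "\<forall>\<^sub>F \<alpha> in at_right 0. \<forall>t\<in>cube I. H j (x + \<alpha> *\<^sub>R perturbed_dir \<eta> \<epsilon> t) < H j x"
    unfolding perturbed_dir_def
  proof (rule eventually_less_on_cube[OF finite_I])
    show "0 < - (\<eta> * h j v0 / 2)"
      using assms v0(1) by (simp add: mult_pos_neg)
  qed (use active margin assms in \<open>auto simp: perturbed_dir_def\<close>)
  then show ?thesis
    using active assms(3) by simp
qed

lemma norm_perturbed_dir_le:
  assumes t: "t \<in> cube I" and \<epsilon>: "0 \<le> \<epsilon>" "\<epsilon> \<le> \<eta>"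
  shows "norm (perturbed_dir \<eta> \<epsilon> t - v) \<le> \<eta> * (norm v0 + (\<Sum>j\<in>I. norm (V j) + norm (W j)))"
proof -
  have "norm (perturbed_dir \<eta> \<epsilon> t - v) \<le> norm (perturbed_dir \<eta> \<epsilon> t - (v + \<eta> *\<^sub>R v0)) + norm (\<eta> *\<^sub>R v0)"
    using norm_triangle_ineq[of "perturbed_dir \<eta> \<epsilon> t - (v + \<eta> *\<^sub>R v0)" "\<eta> *\<^sub>R v0"] by simp
  also have "\<dots> \<le> \<eta> * (\<Sum>j\<in>I. norm (V j) + norm (W j)) + \<eta> * norm v0"
    using norm_cube_dir_le[OF t \<epsilon>(1), of V W "v + \<eta> *\<^sub>R v0"] \<epsilon>
      mult_right_mono[of \<epsilon> \<eta> "\<Sum>j\<in>I. norm (V j) + norm (W j)"]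
    by (simp add: perturbed_dir_def sum_nonneg)
  finally show ?thesis
    by (simp add: algebra_simps)
qed

lemma feasible_point_near:
  assumes r: "0 < r" and cont: "\<forall>i\<in>I. continuous_on (ball x r) (F i)" and \<eta>: "0 < \<eta>"
  shows "\<exists>\<alpha> z. 0 < \<alpha> \<and> \<alpha> \<le> \<eta> \<and> norm (z - v) \<le> \<eta> * (norm v0 + (\<Sum>j\<in>I. norm (V j) + norm (W j))) \<and>
           x + \<alpha> *\<^sub>R z \<in> ball x r \<and> (\<forall>i\<in>I. F i (x + \<alpha> *\<^sub>R z) = 0) \<and> (\<forall>j\<in>J. H j (x + \<alpha> *\<^sub>R z) < 0)"
proof -
  have "\<forall>\<^sub>F \<epsilon> in at_right 0. (\<forall>j\<in>J. \<forall>t\<in>cube I. h j (perturbed_dir \<eta> \<epsilon> t) \<le> \<eta> * h j v0 / 2) \<and>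
      0 < \<epsilon> \<and> \<epsilon> < \<eta>"
    using eventually_inequality_margin[OF \<eta>] eventually_at_right_less eventually_at_right_less_const[OF \<eta>]
    by (simp add: eventually_conj_iff)
  then obtain \<epsilon> where margin: "\<forall>j\<in>J. \<forall>t\<in>cube I. h j (perturbed_dir \<eta> \<epsilon> t) \<le> \<eta> * h j v0 / 2"
    and \<epsilon>: "0 < \<epsilon>" "\<epsilon> < \<eta>"
    using eventually_happens'[OF trivial_limit_at_right_real] by blast
  let ?\<Phi> = "perturbed_dir \<eta> \<epsilon>"
  have "\<forall>\<^sub>F \<alpha> in at_right 0. \<forall>i\<in>I. \<forall>t\<in>{t \<in> cube I. t i = 1}. F i (x + \<alpha> *\<^sub>R ?\<Phi> t) < 0"
    using eventually_face_one[OF less_imp_le[OF \<eta>] \<epsilon>(1)] finite_I by (simp add: eventually_ball_finite_distrib)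
  moreover have "\<forall>\<^sub>F \<alpha> in at_right 0. \<forall>i\<in>I. \<forall>t\<in>{t \<in> cube I. t i = 0}. 0 < F i (x + \<alpha> *\<^sub>R ?\<Phi> t)"
    using eventually_face_zero[OF less_imp_le[OF \<eta>] \<epsilon>(1)] finite_I by (simp add: eventually_ball_finite_distrib)
  moreover have "\<forall>\<^sub>F \<alpha> in at_right 0. \<forall>j\<in>J. \<forall>t\<in>cube I. H j (x + \<alpha> *\<^sub>R ?\<Phi> t) < 0"
    using eventually_active[OF \<eta> \<epsilon>(1)] margin finite_J by (simp add: eventually_ball_finite_distrib)
  moreover have "\<forall>\<^sub>F \<alpha> in at_right 0. \<forall>t\<in>cube I. x + \<alpha> *\<^sub>R ?\<Phi> t \<in> ball x r"
    unfolding perturbed_dir_def using r \<epsilon>(1) by (intro eventually_cube_dir_in_ball) auto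
  ultimately have "\<forall>\<^sub>F \<alpha> in at_right 0. (\<forall>i\<in>I. \<forall>t\<in>{t \<in> cube I. t i = 1}. F i (x + \<alpha> *\<^sub>R ?\<Phi> t) < 0) \<and>
      (\<forall>i\<in>I. \<forall>t\<in>{t \<in> cube I. t i = 0}. 0 < F i (x + \<alpha> *\<^sub>R ?\<Phi> t)) \<and>
      (\<forall>j\<in>J. \<forall>t\<in>cube I. H j (x + \<alpha> *\<^sub>R ?\<Phi> t) < 0) \<and>
      (\<forall>t\<in>cube I. x + \<alpha> *\<^sub>R ?\<Phi> t \<in> ball x r) \<and> 0 < \<alpha> \<and> \<alpha> < \<eta>"
    using eventually_at_right_less[of 0] eventually_at_right_less_const[OF \<eta>]
    by (intro eventually_conj) assumption+
  then obtain \<alpha> where face1: "\<forall>i\<in>I. \<forall>t\<in>{t \<in> cube I. t i = 1}. F i (x + \<alpha> *\<^sub>R ?\<Phi> t) < 0"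
    and face0: "\<forall>i\<in>I. \<forall>t\<in>{t \<in> cube I. t i = 0}. 0 < F i (x + \<alpha> *\<^sub>R ?\<Phi> t)"
    and active: "\<forall>j\<in>J. \<forall>t\<in>cube I. H j (x + \<alpha> *\<^sub>R ?\<Phi> t) < 0"
    and in_ball: "\<forall>t\<in>cube I. x + \<alpha> *\<^sub>R ?\<Phi> t \<in> ball x r" and \<alpha>: "0 < \<alpha>" "\<alpha> < \<eta>"
    using eventually_happens'[OF trivial_limit_at_right_real] by blast
  have "\<exists>t\<in>cube I. \<forall>i\<in>I. F i (x + \<alpha> *\<^sub>R ?\<Phi> t) = 0"
    unfolding perturbed_dir_def
    by (rule common_zero_along_cube_dir[OF finite_I])
      (use cont face0 face1 in_ball in \<open>auto simp: perturbed_dir_def\<close>)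
  then obtain t where t: "t \<in> cube I" and zero: "\<forall>i\<in>I. F i (x + \<alpha> *\<^sub>R ?\<Phi> t) = 0"
    by blast
  have "norm (?\<Phi> t - v) \<le> \<eta> * (norm v0 + (\<Sum>j\<in>I. norm (V j) + norm (W j)))"
    using norm_perturbed_dir_le[OF t] \<epsilon> by simp
  then show ?thesis
    using \<alpha> t zero active in_ball by (intro exI[of _ \<alpha>] exI[of _ "?\<Phi> t"]) auto
qed

lemma in_contingent_cone:
  assumes r: "0 < r" "\<forall>i\<in>I. continuous_on (ball x r) (F i)"
    and M: "\<And>y. y \<in> ball x r \<Longrightarrow> \<forall>i\<in>I. F i y = 0 \<Longrightarrow> \<forall>j\<in>J. H j y < 0 \<Longrightarrow> y \<in> M"
  shows "v \<in> contingent_cone M x"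
proof (rule contingent_coneI)
  fix \<eta> :: real assume "0 < \<eta>"
  then show "\<exists>\<alpha> z. 0 < \<alpha> \<and> \<alpha> \<le> \<eta> \<and> norm (z - v) \<le> \<eta> * (norm v0 + (\<Sum>j\<in>I. norm (V j) + norm (W j))) \<and>
      x + \<alpha> *\<^sub>R z \<in> M"
    using feasible_point_near[OF r] M by blast
qed

end

theorem theorem1:
  fixes f g :: "nat \<Rightarrow> 'a::banach \<Rightarrow> real"
    and m l :: nat
    and M :: "'a set" and xbar :: 'a
    and Dlf Duf Dlg Dug :: "nat \<Rightarrow> ('a \<Rightarrow> real) set"
    and xs ys zs :: "nat \<Rightarrow> ('a \<Rightarrow> real)"
    and Jx :: "nat set"
  assumes M_def: "M = {x. (\<forall>i\<in>{1..m}. f i x = 0) \<and> (\<forall>j\<in>{1..l}. g j x \<le> 0)}"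
    and xbar_M: "xbar \<in> M"
    and Jx_def: "Jx = {j\<in>{1..l}. g j xbar = 0}"
    and f_cont: "\<forall>i\<in>{1..m}. \<exists>U. open U \<and> xbar \<in> U \<and> continuous_on U (f i)"
    and g_usc: "\<forall>j\<in>{1..l} - Jx. usc_at (g j) xbar"
    and f_qd: "\<forall>i\<in>{1..m}. quasidiff_unif (f i) xbar (Dlf i) (Duf i)"
    and g_qd: "\<forall>j\<in>Jx. quasidiff_unif (g j) xbar (Dlg j) (Dug j)"
    and xs_in: "\<forall>i\<in>{1..m}. xs i \<in> Dlf i"
    and ys_in: "\<forall>i\<in>{1..m}. ys i \<in> Duf i"
    and zs_in: "\<forall>j\<in>Jx. zs j \<in> Dug j"
    and CQ1: "\<forall>i\<in>{1..m}. \<exists>v. supp (mink_plus (Dlf i) {ys i}) v < 0 \<and>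
               (\<forall>k\<in>{1..m}. k \<noteq> i \<longrightarrow> supp (mink_plus (Dlf k) {ys k}) v \<le> 0 \<and>
                   supp (mink_plus {\<lambda>u. - xs k u} (fun_uminus_set (Duf k))) v \<le> 0)"
    and CQ2: "\<forall>i\<in>{1..m}. \<exists>w. supp (mink_plus {\<lambda>u. - xs i u} (fun_uminus_set (Duf i))) w < 0 \<and>
               (\<forall>k\<in>{1..m}. k \<noteq> i \<longrightarrow> supp (mink_plus {\<lambda>u. - xs k u} (fun_uminus_set (Duf k))) w \<le> 0 \<and>
                   supp (mink_plus (Dlf k) {ys k}) w \<le> 0)"
    and CQ3: "\<exists>v0. (\<forall>j\<in>Jx. supp (mink_plus (Dlg j) {zs j}) v0 < 0) \<and>
               (\<forall>i\<in>{1..m}. supp (mink_plus (Dlf i) {ys i}) v0 \<le> 0 \<and>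
                   supp (mink_plus {\<lambda>u. - xs i u} (fun_uminus_set (Duf i))) v0 \<le> 0)"
  shows "{v. (\<forall>i\<in>{1..m}. supp (mink_plus (Dlf i) {ys i}) v \<le> 0 \<and>
               supp (mink_plus {\<lambda>u. - xs i u} (fun_uminus_set (Duf i))) v \<le> 0) \<and>
             (\<forall>j\<in>Jx. supp (mink_plus (Dlg j) {zs j}) v \<le> 0)}
         \<subseteq> contingent_cone M xbar"
proof (intro subsetI, goal_cases)
  case (1 v)
  define p where "p i = supp (mink_plus (Dlf i) {ys i})" for i
  define q where "q i = supp (mink_plus {\<lambda>u. - xs i u} (fun_uminus_set (Duf i)))" for i
  define h where "h j = supp (mink_plus (Dlg j) {zs j})" for j
  have equality: "\<forall>i\<in>{1..m}. f i xbar = 0 \<and> dir_deriv_majorant (f i) xbar (p i) \<and>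
      dir_deriv_majorant (\<lambda>y. - f i y) xbar (q i)"
  proof
    fix i assume i: "i \<in> {1..m}"
    show "f i xbar = 0 \<and> dir_deriv_majorant (f i) xbar (p i) \<and> dir_deriv_majorant (\<lambda>y. - f i y) xbar (q i)"
      using xbar_M i quasidiff_unif_dir_deriv_majorant[OF f_qd[rule_format, OF i] ys_in[rule_format, OF i]]
        quasidiff_unif_uminus_dir_deriv_majorant[OF f_qd[rule_format, OF i] xs_in[rule_format, OF i]]
      unfolding M_def p_def q_def by blast
  qed
  have active: "\<forall>j\<in>Jx. g j xbar = 0 \<and> dir_deriv_majorant (g j) xbar (h j)"
  proof
    fix j assume j: "j \<in> Jx"
    show "g j xbar = 0 \<and> dir_deriv_majorant (g j) xbar (h j)"
      using j quasidiff_unif_dir_deriv_majorant[OF g_qd[rule_format, OF j] zs_in[rule_format, OF j]]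
      unfolding Jx_def h_def by blast
  qed
  have "finite Jx"
    by (simp add: Jx_def)
  then have "\<exists>V W v0. cq_system xbar {1..m} f p q Jx g h v v0 V W"
    using equality active 1 bchoice[OF CQ1] bchoice[OF CQ2] CQ3
    unfolding cq_system_def p_def q_def h_def mem_Collect_eq by blast
  then obtain V W v0 where "cq_system xbar {1..m} f p q Jx g h v v0 V W"
    by blast
  then interpret cq_system xbar "{1..m}" f p q Jx g h v v0 V W .
  have inactive: "\<forall>j\<in>{1..l} - Jx. usc_at (g j) xbar \<and> g j xbar < 0"
    using g_usc xbar_M by (auto simp: M_def Jx_def order.strict_iff_order)
  obtain r where r: "0 < r" "\<forall>i\<in>{1..m}. continuous_on (ball xbar r) (f i)"
    "\<forall>j\<in>{1..l} - Jx. \<forall>y\<in>ball xbar r. g j y < 0"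
    using ex_ball_continuous_negative[OF _ _ f_cont inactive] by auto
  show ?case
  proof (rule in_contingent_cone[OF r(1,2)])
    fix y assume y: "y \<in> ball xbar r" "\<forall>i\<in>{1..m}. f i y = 0" "\<forall>j\<in>Jx. g j y < 0"
    have "g j y \<le> 0" if "j \<in> {1..l}" for j
      using y(1,3) r(3) that by (cases "j \<in> Jx") (auto intro: less_imp_le)
    then show "y \<in> M"
      using y(2) by (simp add: M_def)
  qed
qed

end
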